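(* Let $\boldsymbol A$ be sampled from the planted dense $m\times n$-submatrix model with planted sets $\bar U,\bar V$ ($|\bar U|=m\le n=|\bar V|$), probabilities $q>p$, and let $\gamma>0$. For $i\in\bar U$ let $\bar\mu_i$ be the number of zero entries of $\boldsymbol A$ in row $i$ among the columns $\bar V$; for $j\in\bar V$ let $\bar\nu_j$ be the number of zero entries of $\boldsymbol A$ in column $j$ among the rows $\bar U$; let $s=\sum_{i\in\bar U}\bar\mu_i$. Set $$ \tau=12\left(1+\frac1{\sqrt m}\right)\max\left\{\sqrt{\sigma_q^2\frac{\log N}{m}},\ \frac{\log N}{m}\right\},\qquad \tilde\lambda=\gamma(1-q)+\gamma\tau, $$ and for $i\in\bar U$, $j\in\bar V$ define $\Lambda_{ij}=y_i+z_j$, where $$ y_i=\frac1n\left(\tilde\lambda\frac{n^2}{m+n}-\gamma\bar\mu_i+\gamma\frac{s}{m+n}\right),\qquad z_j=\frac1m\left(\tilde\lambda\frac{m^2}{m+n}-\gamma\bar\nu_j+\gamma\frac{s}{m+n}\right). $$ Then with high probability $\Lambda_{ij}\ge 0$ for all $i\in\bar U$, $j\in\bar V$.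
   Context: Planted dense $m\times n$-submatrix model: a random $M\times N$ binary matrix $\boldsymbol A$ with $M\le N$, in which entries indexed by $\bar U\times\bar V$ equal $1$ independently with probability $q$ and all other entries equal $1$ independently with probability $p<q$. $\sigma_q^2=q(1-q)$. Parameters may depend on $N$; "with high probability" means with probability at least $1-\hat c_1N^{-\hat c_2}$ for constants $\hat c_1,\hat c_2>0$, as $N\to\infty$. *)

theory Defs
  imports "HOL-Probability.Probability"
begin

text \<open>A binary M x N matrix is a function from index pairs to bool (True = entry 1).
Rows are indexed by {..<M}, columns by {..<N}.\<close>

definition planted_pmf ::
  "nat \<Rightarrow> nat \<Rightarrow> nat set \<Rightarrow> nat set \<Rightarrow> real \<Rightarrow> real \<Rightarrow> (nat \<times> nat \<Rightarrow> bool) pmf" where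
  "planted_pmf M N U V p q =
     Pi_pmf ({..<M} \<times> {..<N}) False
       (\<lambda>(i, j). bernoulli_pmf (if i \<in> U \<and> j \<in> V then q else p))"

definition sigma_sq :: "real \<Rightarrow> real" where
  "sigma_sq q = q * (1 - q)"

definition row_zeros :: "(nat \<times> nat \<Rightarrow> bool) \<Rightarrow> nat set \<Rightarrow> nat \<Rightarrow> nat" where
  "row_zeros A V i = card {j \<in> V. \<not> A (i, j)}"

definition col_zeros :: "(nat \<times> nat \<Rightarrow> bool) \<Rightarrow> nat set \<Rightarrow> nat \<Rightarrow> nat" where
  "col_zeros A U j = card {i \<in> U. \<not> A (i, j)}"

definition tau :: "nat \<Rightarrow> nat \<Rightarrow> real \<Rightarrow> real" where
  "tau N m q = 12 * (1 + 1 / sqrt (real m)) *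
      max (sqrt (sigma_sq q * ln (real N) / real m)) (ln (real N) / real m)"

definition lambda_tilde :: "nat \<Rightarrow> nat \<Rightarrow> real \<Rightarrow> real \<Rightarrow> real" where
  "lambda_tilde N m q \<gamma> = \<gamma> * (1 - q) + \<gamma> * tau N m q"

definition Lambda ::
  "nat \<Rightarrow> nat set \<Rightarrow> nat set \<Rightarrow> real \<Rightarrow> real \<Rightarrow> (nat \<times> nat \<Rightarrow> bool) \<Rightarrow> nat \<Rightarrow> nat \<Rightarrow> real" where
  "Lambda N U V q \<gamma> A i j =
     (let m = real (card U); n = real (card V);
          lt = lambda_tilde N (card U) q \<gamma>;
          s = real (\<Sum>i'\<in>U. row_zeros A V i');
          y = (1 / n) * (lt * n\<^sup>2 / (m + n) - \<gamma> * real (row_zeros A V i) + \<gamma> * s / (m + n));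
          z = (1 / m) * (lt * m\<^sup>2 / (m + n) - \<gamma> * real (col_zeros A U j) + \<gamma> * s / (m + n))
      in y + z)"

end

theory Submission
  imports Defs
begin

text \<open>Expanding the definition, \<open>\<Lambda>\<^sub>i\<^sub>j = \<lambda>' - \<gamma>\<mu>\<^sub>i/n - \<gamma>\<nu>\<^sub>j/m + \<gamma>s/(mn)\<close> with
  \<open>\<lambda>' = \<gamma>(1 - q) + 4\<gamma>t\<close>, \<open>t = \<tau>/4\<close>. If every row zero-count \<open>\<mu>\<^sub>i\<close> of the planted block lies within
  \<open>nt\<close> of its mean \<open>n(1 - q)\<close> and every column zero-count \<open>\<nu>\<^sub>j\<close> is at most \<open>m(1 - q + t)\<close>, the last
  three terms are each within \<open>\<gamma>t\<close> of \<open>\<gamma>(1 - q)\<close>, so \<open>\<Lambda>\<^sub>i\<^sub>j \<ge> \<gamma>t \<ge> 0\<close>.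
  Each of these counts is binomial with at least \<open>m\<close> trials. The variance-sensitive bound
  \<open>E exp(u(X - r)) \<le> exp(2r(1 - r)u\<^sup>2)\<close> for \<open>X\<close> Bernoulli(\<open>r\<close>) and \<open>|u| \<le> 1\<close>, with the exponential
  Markov inequality and the choice of \<open>\<tau>\<close>, bounds each deviation probability by \<open>N\<^sup>-\<^sup>9\<^sup>/\<^sup>8\<close>; a union
  bound over the at most \<open>3N\<close> counts finishes.\<close>

lemma exp_le_one_plus_plus_square:
  fixes s :: real assumes "\<bar>s\<bar> \<le> 1" shows "exp s \<le> 1 + s + s\<^sup>2"
proof (cases "s \<ge> 0")
  case True then show ?thesis using assms exp_bound by simp
next
  case False
  define y where "y = - s"
  have y: "0 \<le> y" "y \<le> 1" using False assms by (auto simp: y_def)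
  have lower: "1 + y + y\<^sup>2/2 \<le> exp y" by (rule exp_lower_Taylor_quadratic) (use y in auto)
  have pos: "0 < 1 + y + y\<^sup>2/2" using y by (simp add: add_pos_nonneg)
  have "exp s = 1 / exp y" by (simp add: y_def exp_minus field_simps)
  also have "\<dots> \<le> 1 / (1 + y + y\<^sup>2/2)" using lower pos by (simp add: frac_le)
  also have "\<dots> \<le> 1 - y + y\<^sup>2"
  proof -
    have "(1 - y + y\<^sup>2) * (1 + y + y\<^sup>2/2) = 1 + y\<^sup>2/2 + y^3/2 + y^4/2"
      by (simp add: field_simps eval_nat_numeral)
    moreover have "0 \<le> y\<^sup>2/2 + y^3/2 + y^4/2" using y by simp
    ultimately have "1 \<le> (1 - y + y\<^sup>2) * (1 + y + y\<^sup>2/2)" by linarith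
    then show ?thesis using pos by (simp add: divide_le_eq)
  qed
  finally show ?thesis by (simp add: y_def)
qed

lemma bernoulli_centered_mgf_le_exp:
  fixes r s :: real assumes "0 \<le> r" "\<bar>s\<bar> \<le> 1"
  shows "(1 - r + r * exp s) * exp (- s * r) \<le> exp (r * s\<^sup>2)"
proof -
  have "1 - r + r * exp s = 1 + r * (exp s - 1)" by (simp add: algebra_simps)
  also have "\<dots> \<le> exp (r * (exp s - 1))" by (rule exp_ge_add_one_self)
  also have "\<dots> \<le> exp (r * (s + s\<^sup>2))"
    using exp_le_one_plus_plus_square[OF assms(2)] assms by (simp add: mult_left_mono)
  finally have "(1 - r + r * exp s) * exp (- s * r) \<le> exp (r * (s + s\<^sup>2)) * exp (- s * r)"
    by (simp add: mult_right_mono)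
  also have "\<dots> = exp (r * s\<^sup>2)" by (simp add: exp_add[symmetric] algebra_simps)
  finally show ?thesis .
qed

lemma min_le_two_mult_one_minus:
  fixes r :: real assumes "0 \<le> r" "r \<le> 1" shows "min r (1 - r) \<le> 2 * r * (1 - r)"
proof (cases "2 * r \<le> 1")
  case True
  then have "0 \<le> r * (1 - 2 * r)" using assms by simp
  then show ?thesis using True by (simp add: min_def algebra_simps)
next
  case False
  then have "0 \<le> (1 - r) * (2 * r - 1)" using assms by simp
  then show ?thesis using False by (simp add: min_def algebra_simps)
qed

text \<open>The bound \<open>exp (r s\<^sup>2)\<close> is poor for \<open>r\<close> close to \<open>1\<close>; applying it to the complementary
  variable (\<open>1 - r\<close>, \<open>-s\<close>) repairs this, and the better of the two is within \<open>2r(1-r)\<close>.\<close>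

lemma bernoulli_centered_mgf_le:
  fixes r s :: real assumes "0 \<le> r" "r \<le> 1" "\<bar>s\<bar> \<le> 1"
  shows "(1 - r + r * exp s) * exp (- s * r) \<le> exp (2 * r * (1 - r) * s\<^sup>2)"
proof -
  have "(1 - r + r * exp s) * exp (- s * r) = (1 - (1 - r) + (1 - r) * exp (- s)) * exp (- (- s) * (1 - r))"
    by (simp add: algebra_simps exp_add[symmetric] exp_diff) (simp add: exp_minus field_simps exp_add[symmetric])
  also have "\<dots> \<le> exp ((1 - r) * s\<^sup>2)"
    using bernoulli_centered_mgf_le_exp[of "1 - r" "- s"] assms by simp
  finally have "(1 - r + r * exp s) * exp (- s * r) \<le> exp (min r (1 - r) * s\<^sup>2)"
    using bernoulli_centered_mgf_le_exp[OF assms(1,3)] by (auto simp: min_def)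
  also have "\<dots> \<le> exp (2 * r * (1 - r) * s\<^sup>2)"
    using min_le_two_mult_one_minus[OF assms(1,2)] by (simp add: mult_right_mono)
  finally show ?thesis .
qed

lemma chernoff_exponent_exists:
  fixes \<sigma> L m k t :: real
  assumes "0 \<le> \<sigma>" "0 \<le> L" "0 < m" "m \<le> k" "9 * \<sigma> * L / m \<le> t\<^sup>2" "3 * L / m \<le> t"
  shows "\<exists>s. 0 \<le> s \<and> s \<le> 1 \<and> k * (2 * \<sigma> * s\<^sup>2 - s * t) \<le> - (9/8) * L"
proof -
  have t0: "0 \<le> t" using assms by (smt (verit) divide_nonneg_pos)
  have "3 * L \<le> m * t" using assms by (simp add: divide_le_eq mult.commute)
  moreover have "m * t \<le> k * t" using assms t0 by (simp add: mult_right_mono)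
  ultimately have Lt: "3 * L \<le> k * t" by linarith
  show ?thesis
  proof (cases "0 < \<sigma> \<and> t \<le> 4 * \<sigma>")
    case True
    define s where "s = t / (4 * \<sigma>)"
    have s: "0 \<le> s" "s \<le> 1" using True t0 by (auto simp: s_def)
    have exponent: "2 * \<sigma> * s\<^sup>2 - s * t = - (t\<^sup>2 / (8 * \<sigma>))"
      using True by (simp add: s_def field_simps power2_eq_square)
    have "9 * \<sigma> * L \<le> m * t\<^sup>2" using assms by (simp add: divide_le_eq mult.commute)
    also have "\<dots> \<le> k * t\<^sup>2" using assms by (simp add: mult_right_mono)
    finally have "9 * L / 8 \<le> k * (t\<^sup>2 / (8 * \<sigma>))" using True by (simp add: field_simps)
    then show ?thesis using s exponent by (intro exI[of _ s]) auto
  next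
    case False
    then have "2 * \<sigma> \<le> t / 2" using assms t0 by auto
    then have "k * (2 * \<sigma> * 1\<^sup>2 - 1 * t) \<le> k * (- t / 2)"
      using assms by (intro mult_left_mono) auto
    then show ?thesis using Lt assms(2) by (intro exI[of _ 1]) auto
  qed
qed

lemma exp_mult_card_filter_eq_prod:
  assumes "finite I" "S \<subseteq> I"
  shows "exp (u * real (card {x\<in>S. \<not> f x})) = (\<Prod>x\<in>I. if x \<in> S \<and> \<not> f x then exp u else 1)"
proof -
  have "(\<Prod>x\<in>I. if x \<in> S \<and> \<not> f x then exp u else 1) = (\<Prod>x\<in>{x\<in>I. x \<in> S \<and> \<not> f x}. exp u)"
    using assms(1) by (simp only: prod.inter_filter)
  also have "{x\<in>I. x \<in> S \<and> \<not> f x} = {x\<in>S. \<not> f x}" using assms(2) by blast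
  finally show ?thesis by (simp add: exp_of_nat_mult[symmetric] mult.commute)
qed

lemma expectation_exp_card_false_Pi_pmf:
  assumes "finite I" "S \<subseteq> I" "\<And>x. x \<in> S \<Longrightarrow> pp x = bernoulli_pmf q" "0 \<le> q" "q \<le> 1"
  shows "measure_pmf.expectation (Pi_pmf I d pp) (\<lambda>f. exp (u * real (card {x\<in>S. \<not> f x})))
           = (q + (1 - q) * exp u) ^ card S"
proof -
  define g where "g = (\<lambda>x (b::bool). if x \<in> S \<and> \<not> b then exp u else 1)"
  have "measure_pmf.expectation (Pi_pmf I d pp) (\<lambda>f. exp (u * real (card {x\<in>S. \<not> f x})))
      = measure_pmf.expectation (Pi_pmf I d pp) (\<lambda>f. \<Prod>x\<in>I. g x (f x))"
    using exp_mult_card_filter_eq_prod[OF assms(1,2)] by (simp add: g_def)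
  also have "\<dots> = (\<Prod>x\<in>I. measure_pmf.expectation (pp x) (g x))"
    by (rule expectation_prod_Pi_pmf[OF assms(1)])
       (auto simp: g_def intro!: integrable_measure_pmf_finite)
  also have "\<dots> = (\<Prod>x\<in>I. if x \<in> S then q + (1 - q) * exp u else 1)"
    using assms by (intro prod.cong refl) (auto simp: g_def integral_bernoulli_pmf)
  also have "\<dots> = (q + (1 - q) * exp u) ^ card S"
    using assms(1,2) by (simp add: prod.If_cases Int_absorb1)
  finally show ?thesis .
qed

lemma prob_ge_le_expectation_exp:
  fixes P :: "'a pmf" and X :: "'a \<Rightarrow> real"
  assumes "finite (set_pmf P)"
  shows "measure_pmf.prob P {f. a \<le> X f} \<le> measure_pmf.expectation P (\<lambda>f. exp (X f - a))"
proof -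
  have "measure_pmf.prob P {f. a \<le> X f} = measure_pmf.expectation P (indicator {f. a \<le> X f})"
    by simp
  also have "\<dots> \<le> measure_pmf.expectation P (\<lambda>f. exp (X f - a))"
    using assms by (intro integral_mono integrable_measure_pmf_finite) (auto simp: indicator_def)
  finally show ?thesis .
qed

lemma finite_set_Pi_pmf:
  fixes pp :: "'a \<Rightarrow> 'b::finite pmf"
  assumes "finite I" shows "finite (set_pmf (Pi_pmf I d pp))"
  by (rule finite_subset[OF set_Pi_pmf_subset'[OF assms]]) (intro finite_PiE_dflt assms; simp)

lemma prob_card_false_Pi_pmf_deviation_le:
  assumes "finite I" "S \<subseteq> I" "\<And>x. x \<in> S \<Longrightarrow> pp x = bernoulli_pmf q" "0 \<le> q" "q \<le> 1"
    and "\<bar>u\<bar> \<le> 1"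
  shows "measure_pmf.prob (Pi_pmf I d pp)
           {f. \<bar>u\<bar> * real (card S) * t \<le> u * (real (card {x\<in>S. \<not> f x}) - real (card S) * (1 - q))}
         \<le> exp (real (card S) * (2 * q * (1 - q) * u\<^sup>2 - \<bar>u\<bar> * t))"
proof -
  define k where "k = card S"
  define P where "P = Pi_pmf I d pp"
  define Z where "Z = (\<lambda>f. real (card {x\<in>S. \<not> f x}))"
  define c where "c = exp (- u * real k * (1 - q)) * exp (- \<bar>u\<bar> * real k * t)"
  have "measure_pmf.prob P {f. \<bar>u\<bar> * real k * t \<le> u * (Z f - real k * (1 - q))}
      \<le> measure_pmf.expectation P (\<lambda>f. exp (u * (Z f - real k * (1 - q)) - \<bar>u\<bar> * real k * t))"
    unfolding P_def by (rule prob_ge_le_expectation_exp[OF finite_set_Pi_pmf[OF assms(1)]])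
  also have "\<dots> = measure_pmf.expectation P (\<lambda>f. exp (u * Z f) * c)"
    by (intro Bochner_Integration.integral_cong refl) (simp add: c_def exp_add[symmetric] algebra_simps)
  also have "\<dots> = (q + (1 - q) * exp u) ^ k * c"
    using expectation_exp_card_false_Pi_pmf[OF assms(1-5)] by (simp add: P_def Z_def k_def)
  also have "\<dots> = ((1 - (1 - q) + (1 - q) * exp u) * exp (- u * (1 - q))) ^ k * exp (- \<bar>u\<bar> * real k * t)"
    by (simp add: c_def power_mult_distrib exp_of_nat_mult[symmetric] mult_ac)
  also have "\<dots> \<le> exp (2 * (1 - q) * (1 - (1 - q)) * u\<^sup>2) ^ k * exp (- \<bar>u\<bar> * real k * t)"
    using assms by (intro mult_right_mono power_mono bernoulli_centered_mgf_le)
      (auto intro!: mult_nonneg_nonneg add_nonneg_nonneg)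
  also have "\<dots> = exp (real k * (2 * q * (1 - q) * u\<^sup>2 - \<bar>u\<bar> * t))"
    by (simp add: exp_of_nat_mult[symmetric] exp_add[symmetric] algebra_simps)
  finally show ?thesis by (simp add: P_def Z_def k_def)
qed

lemma prob_card_false_Pi_pmf_deviation_le_powr:
  assumes product: "finite I" "S \<subseteq> I" "\<And>x. x \<in> S \<Longrightarrow> pp x = bernoulli_pmf q" "0 \<le> q" "q \<le> 1"
    and "1 \<le> N" "0 < m" "m \<le> real (card S)"
    and "9 * (q * (1 - q)) * ln N / m \<le> t\<^sup>2" "3 * ln N / m \<le> t"
  shows "measure_pmf.prob (Pi_pmf I d pp) {f. real (card S) * (1 - q + t) \<le> real (card {x\<in>S. \<not> f x})}
           \<le> N powr (- 9/8)"
    and "measure_pmf.prob (Pi_pmf I d pp) {f. real (card {x\<in>S. \<not> f x}) \<le> real (card S) * (1 - q - t)}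
           \<le> N powr (- 9/8)"
proof -
  let ?P = "Pi_pmf I d pp" and ?k = "real (card S)" and ?Z = "\<lambda>f. real (card {x\<in>S. \<not> f x})"
  obtain s where s: "0 \<le> s" "s \<le> 1"
    and exponent: "?k * (2 * (q * (1 - q)) * s\<^sup>2 - s * t) \<le> - (9/8) * ln N"
    using chernoff_exponent_exists[of "q * (1 - q)" "ln N" m ?k t] assms by auto
  have bound: "exp (?k * (2 * q * (1 - q) * u\<^sup>2 - \<bar>u\<bar> * t)) \<le> N powr (- 9/8)" if "\<bar>u\<bar> = s" for u
  proof -
    have "u\<^sup>2 = s\<^sup>2" using that by (metis power2_abs)
    then show ?thesis using exponent \<open>1 \<le> N\<close> that by (simp add: powr_def mult_ac)
  qed
  have "\<bar>s\<bar> * ?k * t \<le> s * (?Z f - ?k * (1 - q))" if "?k * (1 - q + t) \<le> ?Z f" for f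
  proof -
    have "s * (?k * t) \<le> s * (?Z f - ?k * (1 - q))"
      using that s by (intro mult_left_mono) (auto simp: algebra_simps)
    then show ?thesis using s by (simp add: mult_ac)
  qed
  then have "measure_pmf.prob ?P {f. ?k * (1 - q + t) \<le> ?Z f}
      \<le> measure_pmf.prob ?P {f. \<bar>s\<bar> * ?k * t \<le> s * (?Z f - ?k * (1 - q))}"
    by (intro measure_pmf.finite_measure_mono) auto
  also have "\<dots> \<le> N powr (- 9/8)"
    using s by (intro order_trans[OF prob_card_false_Pi_pmf_deviation_le[where pp = pp and d = d, OF product] bound])
      simp_all
  finally show "measure_pmf.prob ?P {f. ?k * (1 - q + t) \<le> ?Z f} \<le> N powr (- 9/8)" .
  have "\<bar>- s\<bar> * ?k * t \<le> - s * (?Z f - ?k * (1 - q))" if "?Z f \<le> ?k * (1 - q - t)" for f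
  proof -
    have "s * (?k * t) \<le> s * (?k * (1 - q) - ?Z f)"
      using that s by (intro mult_left_mono) (auto simp: algebra_simps)
    then show ?thesis using s by (simp add: algebra_simps)
  qed
  then have "measure_pmf.prob ?P {f. ?Z f \<le> ?k * (1 - q - t)}
      \<le> measure_pmf.prob ?P {f. \<bar>- s\<bar> * ?k * t \<le> - s * (?Z f - ?k * (1 - q))}"
    by (intro measure_pmf.finite_measure_mono) auto
  also have "\<dots> \<le> N powr (- 9/8)"
    using s by (intro order_trans[OF prob_card_false_Pi_pmf_deviation_le[where pp = pp and d = d, OF product] bound])
      simp_all
  finally show "measure_pmf.prob ?P {f. ?Z f \<le> ?k * (1 - q - t)} \<le> N powr (- 9/8)" .
qed

lemma prob_UN_le_card_mult:
  fixes P :: "'a pmf"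
  assumes "finite A" "\<And>a. a \<in> A \<Longrightarrow> measure_pmf.prob P (B a) \<le> X"
  shows "measure_pmf.prob P (\<Union>a\<in>A. B a) \<le> real (card A) * X"
proof -
  have "measure_pmf.prob P (\<Union>a\<in>A. B a) \<le> (\<Sum>a\<in>A. measure_pmf.prob P (B a))"
    using assms(1) by (intro measure_pmf.finite_measure_subadditive_finite) auto
  also have "\<dots> \<le> real (card A) * X" using assms(2) by (rule sum_bounded_above)
  finally show ?thesis .
qed

lemma ln_of_nat_nonneg: "0 \<le> ln (real N)"
  by (cases "N = 0") simp_all

lemma tau_nonneg:
  assumes "0 \<le> q" "q \<le> 1" shows "0 \<le> tau N m q"
proof -
  have "0 \<le> ln (real N) / real m" using ln_of_nat_nonneg by simp
  then have "0 \<le> max (sqrt (sigma_sq q * ln (real N) / real m)) (ln (real N) / real m)"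
    by (simp add: le_max_iff_disj)
  then show ?thesis by (simp add: tau_def)
qed

lemma tau_quarter_bounds:
  assumes "0 \<le> q" "q \<le> 1"
  shows "3 * ln (real N) / real m \<le> tau N m q / 4"
    and "9 * (q * (1 - q)) * ln (real N) / real m \<le> (tau N m q / 4)\<^sup>2"
proof -
  define a where "a = sqrt (sigma_sq q * ln (real N) / real m)"
  define b where "b = ln (real N) / real m"
  have "0 \<le> sigma_sq q" using assms by (simp add: sigma_sq_def)
  then have a0: "0 \<le> a" and b0: "0 \<le> b"
    and a2: "a\<^sup>2 = q * (1 - q) * ln (real N) / real m"
    using ln_of_nat_nonneg[of N] by (simp_all add: a_def b_def sigma_sq_def)
  have "max a b \<le> (1 + 1 / sqrt (real m)) * max a b"
    using a0 b0 by (simp add: mult_le_cancel_right1)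
  then have "3 * max a b \<le> 3 * ((1 + 1 / sqrt (real m)) * max a b)" by linarith
  also have "\<dots> = tau N m q / 4" by (simp add: tau_def a_def b_def)
  finally have max_le: "3 * max a b \<le> tau N m q / 4" .
  then show "3 * ln (real N) / real m \<le> tau N m q / 4" by (simp add: b_def)
  have "(3 * a)\<^sup>2 \<le> (tau N m q / 4)\<^sup>2" using max_le a0 by (intro power_mono) auto
  then show "9 * (q * (1 - q)) * ln (real N) / real m \<le> (tau N m q / 4)\<^sup>2"
    by (simp add: power_mult_distrib a2)
qed

lemma card_false_row_eq_row_zeros: "card {x\<in>{i}\<times>V. \<not> A x} = row_zeros A V i"
proof -
  have "{x\<in>{i}\<times>V. \<not> A x} = Pair i ` {j\<in>V. \<not> A (i, j)}" by auto
  moreover have "inj_on (Pair i) {j\<in>V. \<not> A (i, j)}" by (auto simp: inj_on_def)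
  ultimately show ?thesis by (simp add: card_image row_zeros_def)
qed

lemma card_false_col_eq_col_zeros: "card {x\<in>U\<times>{j}. \<not> A x} = col_zeros A U j"
proof -
  have "{x\<in>U\<times>{j}. \<not> A x} = (\<lambda>i. (i, j)) ` {i\<in>U. \<not> A (i, j)}" by auto
  moreover have "inj_on (\<lambda>i. (i, j)) {i\<in>U. \<not> A (i, j)}" by (auto simp: inj_on_def)
  ultimately show ?thesis by (simp add: card_image col_zeros_def)
qed

lemma planted_prob_zero_count_deviates_le:
  assumes "S \<subseteq> U \<times> V" "U \<subseteq> {..<M}" "V \<subseteq> {..<N}" "U \<noteq> {}" "card U \<le> card S"
    and "0 \<le> q" "q \<le> 1"
  defines "t \<equiv> tau N (card U) q / 4"
  shows "measure_pmf.prob (planted_pmf M N U V p q)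
           {A. real (card S) * (1 - q + t) \<le> real (card {x\<in>S. \<not> A x})} \<le> real N powr (- 9/8)"
    and "measure_pmf.prob (planted_pmf M N U V p q)
           {A. real (card {x\<in>S. \<not> A x}) \<le> real (card S) * (1 - q - t)} \<le> real N powr (- 9/8)"
proof -
  have "finite U" using assms(2) finite_subset by blast
  then have m: "0 < card U" using assms(4) by (simp add: card_gt_0_iff)
  then have "S \<noteq> {}" using assms(5) by auto
  then have N: "1 \<le> real N" using assms(1,3) by auto
  have product: "finite ({..<M} \<times> {..<N})" "S \<subseteq> {..<M} \<times> {..<N}"
    "\<And>x. x \<in> S \<Longrightarrow> (\<lambda>(i, j). bernoulli_pmf (if i \<in> U \<and> j \<in> V then q else p)) x = bernoulli_pmf q"
    using assms(1-3) by auto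
  note deviation = prob_card_false_Pi_pmf_deviation_le_powr[OF product assms(6,7) N,
      where m = "real (card U)" and t = t and d = False]
  show "measure_pmf.prob (planted_pmf M N U V p q)
           {A. real (card S) * (1 - q + t) \<le> real (card {x\<in>S. \<not> A x})} \<le> real N powr (- 9/8)"
    and "measure_pmf.prob (planted_pmf M N U V p q)
           {A. real (card {x\<in>S. \<not> A x}) \<le> real (card S) * (1 - q - t)} \<le> real N powr (- 9/8)"
    using deviation m assms(5) tau_quarter_bounds[OF assms(6,7)] by (simp_all add: planted_pmf_def t_def)
qed

definition zero_counts_concentrated ::
  "(nat \<times> nat \<Rightarrow> bool) \<Rightarrow> nat set \<Rightarrow> nat set \<Rightarrow> real \<Rightarrow> real \<Rightarrow> bool" where
  "zero_counts_concentrated A U V q t \<longleftrightarrow>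
     (\<forall>j\<in>V. real (col_zeros A U j) \<le> real (card U) * (1 - q + t)) \<and>
     (\<forall>i\<in>U. real (card V) * (1 - q - t) \<le> real (row_zeros A V i) \<and>
            real (row_zeros A V i) \<le> real (card V) * (1 - q + t))"

lemma planted_prob_not_concentrated_le:
  assumes "U \<subseteq> {..<M}" "V \<subseteq> {..<N}" "U \<noteq> {}" "card U \<le> card V" "0 \<le> q" "q \<le> 1"
  shows "measure_pmf.prob (planted_pmf M N U V p q)
           {A. \<not> zero_counts_concentrated A U V q (tau N (card U) q / 4)} \<le> 3 * real N powr (- 1/8)"
proof -
  let ?P = "planted_pmf M N U V p q" and ?t = "tau N (card U) q / 4" and ?X = "real N powr (- 9/8)"
  define col_large where "col_large j = {A. real (card U) * (1 - q + ?t) \<le> real (col_zeros A U j)}" for j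
  define row_large where "row_large i = {A. real (card V) * (1 - q + ?t) \<le> real (row_zeros A V i)}" for i
  define row_small where "row_small i = {A. real (row_zeros A V i) \<le> real (card V) * (1 - q - ?t)}" for i
  have finite: "finite U" "finite V" using assms(1,2) finite_subset by blast+
  have "measure_pmf.prob ?P (col_large j) \<le> ?X" if "j \<in> V" for j
  proof -
    have "U \<times> {j} \<subseteq> U \<times> V" using that by blast
    from planted_prob_zero_count_deviates_le(1)[OF this assms(1-3)] show ?thesis
      using assms(5,6) by (simp add: col_large_def card_false_col_eq_col_zeros card_cartesian_product)
  qed
  then have col: "measure_pmf.prob ?P (\<Union>j\<in>V. col_large j) \<le> real (card V) * ?X"
    using finite by (intro prob_UN_le_card_mult)
  have "measure_pmf.prob ?P (row_large i) \<le> ?X" "measure_pmf.prob ?P (row_small i) \<le> ?X" if "i \<in> U" for i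
  proof -
    have "{i} \<times> V \<subseteq> U \<times> V" using that by blast
    note deviation = planted_prob_zero_count_deviates_le[OF this assms(1-3)]
    show "measure_pmf.prob ?P (row_large i) \<le> ?X" "measure_pmf.prob ?P (row_small i) \<le> ?X"
      using deviation assms(4-6)
      by (simp_all add: row_large_def row_small_def card_false_row_eq_row_zeros card_cartesian_product)
  qed
  then have row: "measure_pmf.prob ?P (\<Union>i\<in>U. row_large i) \<le> real (card U) * ?X"
      "measure_pmf.prob ?P (\<Union>i\<in>U. row_small i) \<le> real (card U) * ?X"
    using finite by (auto intro: prob_UN_le_card_mult)
  have "{A. \<not> zero_counts_concentrated A U V q ?t}
      \<subseteq> (\<Union>j\<in>V. col_large j) \<union> (\<Union>i\<in>U. row_large i) \<union> (\<Union>i\<in>U. row_small i)"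
    by (auto simp: zero_counts_concentrated_def col_large_def row_large_def row_small_def)
  then have "measure_pmf.prob ?P {A. \<not> zero_counts_concentrated A U V q ?t}
      \<le> real (card V) * ?X + real (card U) * ?X + real (card U) * ?X"
    using col row by (smt (verit) measure_pmf.finite_measure_mono measure_Un_le sets_measure_pmf UNIV_I)
  also have "\<dots> \<le> 3 * real N * ?X"
  proof -
    have "card V \<le> N" using card_mono[OF _ assms(2)] by simp
    then have "real (card V) + real (card U) + real (card U) \<le> 3 * real N" using assms(4) by linarith
    then show ?thesis by (metis distrib_right mult_right_mono powr_ge_zero)
  qed
  also have "\<dots> = 3 * real N powr (- 1/8)"
    by (cases "N = 0") (simp_all add: powr_add[symmetric] powr_mult_base)
  finally show ?thesis .
qed

lemma Lambda_eq:
  assumes "U \<noteq> {}" "finite U" "V \<noteq> {}" "finite V"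
  shows "Lambda N U V q \<gamma> A i j = lambda_tilde N (card U) q \<gamma>
    - \<gamma> * real (row_zeros A V i) / real (card V) - \<gamma> * real (col_zeros A U j) / real (card U)
    + \<gamma> * real (\<Sum>i'\<in>U. row_zeros A V i') / (real (card U) * real (card V))"
proof -
  have "0 < real (card U)" "0 < real (card V)" using assms by (simp_all add: card_gt_0_iff)
  then have "real (card U) + real (card V) \<noteq> 0" by linarith
  with \<open>0 < real (card U)\<close> \<open>0 < real (card V)\<close> show ?thesis
    by (simp add: Lambda_def Let_def divide_simps power2_eq_square) algebra
qed

lemma Lambda_nonneg_if_concentrated:
  assumes "U \<noteq> {}" "finite U" "V \<noteq> {}" "finite V" "0 < \<gamma>" "0 \<le> tau N (card U) q"
    and "zero_counts_concentrated A U V q (tau N (card U) q / 4)" "i \<in> U" "j \<in> V"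
  shows "0 \<le> Lambda N U V q \<gamma> A i j"
proof -
  define m where "m = real (card U)"
  define n where "n = real (card V)"
  define t where "t = tau N (card U) q / 4"
  have m: "0 < m" and n: "0 < n" using assms(1-4) by (simp_all add: m_def n_def card_gt_0_iff)
  note conc = assms(7)[unfolded zero_counts_concentrated_def, folded m_def n_def t_def]
  have "(\<Sum>i'\<in>U. n * (1 - q - t)) \<le> (\<Sum>i'\<in>U. real (row_zeros A V i'))"
    using conc by (intro sum_mono) auto
  then have "\<gamma> * (1 - q - t) \<le> \<gamma> * real (\<Sum>i'\<in>U. row_zeros A V i') / (m * n)"
    using assms(5) m n by (simp add: m_def le_divide_eq mult_left_mono mult.commute mult.left_commute)
  moreover have "\<gamma> * real (row_zeros A V i) / n \<le> \<gamma> * (1 - q + t)"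
    using conc assms(5,8) n by (simp add: divide_le_eq mult_left_mono mult.commute mult.left_commute)
  moreover have "\<gamma> * real (col_zeros A U j) / m \<le> \<gamma> * (1 - q + t)"
    using conc assms(5,9) m by (simp add: divide_le_eq mult_left_mono mult.commute mult.left_commute)
  moreover have "lambda_tilde N (card U) q \<gamma> = \<gamma> * (1 - q + t) + 3 * (\<gamma> * t)"
    by (simp add: lambda_tilde_def t_def algebra_simps)
  moreover have "0 \<le> \<gamma> * t" using assms(5,6) by (simp add: t_def)
  ultimately show ?thesis
    using Lambda_eq[OF assms(1-4), of N q \<gamma> A i j, folded m_def n_def]
    by (simp only: distrib_left right_diff_distrib)
qed

theorem mainTheorem4:
  "\<exists>c1 c2 :: real. c1 > 0 \<and> c2 > 0 \<and>
    (\<forall>(M::nat) (N::nat) (U::nat set) (V::nat set) (p::real) (q::real) (\<gamma>::real).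
       M \<le> N \<longrightarrow> U \<subseteq> {..<M} \<longrightarrow> V \<subseteq> {..<N} \<longrightarrow> U \<noteq> {} \<longrightarrow>
       card U \<le> card V \<longrightarrow> 0 \<le> p \<longrightarrow> p < q \<longrightarrow> q \<le> 1 \<longrightarrow> \<gamma> > 0 \<longrightarrow>
       measure_pmf.prob (planted_pmf M N U V p q)
         {A. \<forall>i\<in>U. \<forall>j\<in>V. Lambda N U V q \<gamma> A i j \<ge> 0}
       \<ge> 1 - c1 * real N powr (- c2))"
proof (rule exI[of _ 3], rule exI[of _ "1/8"], intro conjI allI impI)
  fix M N :: nat and U V :: "nat set" and p q \<gamma> :: real
  assume "M \<le> N" and U: "U \<subseteq> {..<M}" and V: "V \<subseteq> {..<N}" and "U \<noteq> {}" and "card U \<le> card V"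
    and "0 \<le> p" and "p < q" and "q \<le> 1" and "\<gamma> > 0"
  let ?P = "planted_pmf M N U V p q"
    and ?C = "{A. zero_counts_concentrated A U V q (tau N (card U) q / 4)}"
    and ?G = "{A. \<forall>i\<in>U. \<forall>j\<in>V. Lambda N U V q \<gamma> A i j \<ge> 0}"
  have "finite U" "finite V" "V \<noteq> {}"
    using U V finite_subset \<open>U \<noteq> {}\<close> \<open>card U \<le> card V\<close> by fastforce+
  moreover have "0 \<le> tau N (card U) q" using tau_nonneg \<open>0 \<le> p\<close> \<open>p < q\<close> \<open>q \<le> 1\<close> by simp
  ultimately have "?C \<subseteq> ?G" using Lambda_nonneg_if_concentrated[OF \<open>U \<noteq> {}\<close> _ _ _ \<open>\<gamma> > 0\<close>] by blast
  then have "measure_pmf.prob ?P ?C \<le> measure_pmf.prob ?P ?G"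
    by (rule measure_pmf.finite_measure_mono) simp
  moreover have "measure_pmf.prob ?P ?C = 1 - measure_pmf.prob ?P (UNIV - ?C)"
    using measure_pmf.prob_compl[of "UNIV - ?C" ?P] by (simp add: Diff_Diff_Int)
  moreover have "measure_pmf.prob ?P (UNIV - ?C) \<le> 3 * real N powr (- (1/8))"
    using planted_prob_not_concentrated_le[OF U V \<open>U \<noteq> {}\<close> \<open>card U \<le> card V\<close>]
      \<open>0 \<le> p\<close> \<open>p < q\<close> \<open>q \<le> 1\<close>
    by (simp add: set_diff_eq)
  ultimately show "1 - 3 * real N powr (- (1/8)) \<le> measure_pmf.prob ?P ?G" by linarith
qed simp_all

end
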